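(* There is no uncountable set $\mathcal{S}$ of Turing degrees such that $\mathbb{R}_{\mathcal{S}}$ is $|\mathcal{S}|$-$2$-entangled.
   Context: $\mathbb{R}_{\mathcal{S}}$ is the set of reals whose Turing degree lies in $\mathcal{S}$. For $\aleph_0<\kappa\le 2^{\aleph_0}$, a set $A\subseteq\mathbb{R}$ is $\kappa$-$2$-entangled if $|A|\ge\kappa$ and for every collection of $\kappa$ many pairwise disjoint pairs of elements of $A$ (pairs $(x_\alpha,y_\alpha)$ with $x_\alpha\ne y_\alpha$ and $\{x_\alpha,y_\alpha\}\cap\{x_\beta,y_\beta\}=\emptyset$ for $\alpha\ne\beta$) there are pairs $(x_1,y_1),(x_2,y_2)$ in the collection with $x_1<x_2,y_1<y_2$ and pairs $(w_1,z_1),(w_2,z_2)$ in the collection with $w_1<w_2$, $z_1>z_2$. *)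

theory Defs
  imports Complex_Main "HOL-Library.Equipollence" "HOL-Library.Nat_Bijection" "HOL-Library.Countable_Set"
begin

fun prec :: "(nat list \<Rightarrow> nat option) \<Rightarrow> (nat list \<Rightarrow> nat option) \<Rightarrow> nat \<Rightarrow> nat list \<Rightarrow> nat option" where
  "prec f g 0 xs = f xs"
| "prec f g (Suc y) xs = (case prec f g y xs of None \<Rightarrow> None | Some r \<Rightarrow> g (y # r # xs))"

definition mu_op :: "(nat list \<Rightarrow> nat option) \<Rightarrow> nat list \<Rightarrow> nat option" where
  "mu_op f xs = (if \<exists>y. f (y # xs) = Some 0 \<and> (\<forall>z<y. \<exists>r. f (z # xs) = Some r \<and> r \<noteq> 0)
     then Some (LEAST y. f (y # xs) = Some 0 \<and> (\<forall>z<y. \<exists>r. f (z # xs) = Some r \<and> r \<noteq> 0))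
     else None)"

inductive orec :: "nat set \<Rightarrow> nat \<Rightarrow> (nat list \<Rightarrow> nat option) \<Rightarrow> bool" for B where
  zero: "orec B n (\<lambda>xs. Some 0)"
| succ: "orec B 1 (\<lambda>xs. Some (Suc (hd xs)))"
| proj: "i < n \<Longrightarrow> orec B n (\<lambda>xs. Some (xs ! i))"
| oracle_query: "orec B 1 (\<lambda>xs. Some (if hd xs \<in> B then 1 else 0))"
| comp: "orec B m g \<Longrightarrow> length fs = m \<Longrightarrow> (\<forall>f\<in>set fs. orec B n f) \<Longrightarrow>
     orec B n (\<lambda>xs. if (\<forall>f\<in>set fs. f xs \<noteq> None) then g (map (\<lambda>f. the (f xs)) fs) else None)"
| prim_rec: "orec B n f \<Longrightarrow> orec B (n + 2) g \<Longrightarrow> orec B (n + 1) (\<lambda>xs. prec f g (hd xs) (tl xs))"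
| minim: "orec B (n + 1) f \<Longrightarrow> orec B n (mu_op f)"

definition turing_le :: "nat set \<Rightarrow> nat set \<Rightarrow> bool" where
  "turing_le A B \<longleftrightarrow> (\<exists>f. orec B 1 f \<and> (\<forall>k. f [k] = Some (if k \<in> A then 1 else 0)))"

definition tdeg :: "nat set \<Rightarrow> nat set set" where
  "tdeg A = {C. turing_le C A \<and> turing_le A C}"

text \<open>Turing degrees are the elements of range tdeg.\<close>

text \<open>The (lower) Dedekind cut of a real, coded by natural numbers: n codes the
  rational (a - b)/(c + 1) where n = prod_encode (a, prod_encode (b, c)).\<close>
definition rat_code :: "nat \<Rightarrow> real" where
  "rat_code n = (case prod_decode n of (a, m) \<Rightarrow> (case prod_decode m of (b, c) \<Rightarrow>
       (real a - real b) / (real c + 1)))"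

definition real_cut :: "real \<Rightarrow> nat set" where
  "real_cut x = {n. rat_code n < x}"

definition rdeg :: "real \<Rightarrow> nat set set" where
  "rdeg x = tdeg (real_cut x)"

definition reals_of_degrees :: "nat set set set \<Rightarrow> real set" where
  "reals_of_degrees S = {x. rdeg x \<in> S}"

text \<open>kappa-2-entangled, with kappa given as the cardinality of the set K.\<close>
definition entangled2 :: "'b set \<Rightarrow> real set \<Rightarrow> bool" where
  "entangled2 K A \<longleftrightarrow> K \<lesssim> A \<and>
    (\<forall>C :: (real \<times> real) set. C \<subseteq> A \<times> A \<longrightarrow> C \<approx> K \<longrightarrow>
       (\<forall>c\<in>C. fst c \<noteq> snd c) \<longrightarrow>
       (\<forall>c\<in>C. \<forall>d\<in>C. c \<noteq> d \<longrightarrow> {fst c, snd c} \<inter> {fst d, snd d} = {}) \<longrightarrow>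
       (\<exists>x1 y1 x2 y2. (x1, y1) \<in> C \<and> (x2, y2) \<in> C \<and> x1 < x2 \<and> y1 < y2) \<and>
       (\<exists>w1 z1 w2 z2. (w1, z1) \<in> C \<and> (w2, z2) \<in> C \<and> w1 < w2 \<and> z1 > z2))"

end

theory Submission
  imports Defs
begin

text \<open>Adding 1 to a real does not change the Turing degree of its Dedekind cut: the
  rational with code \<open>n\<close> lies below \<open>x + 1\<close> iff the rational with a computably
  transformed code lies below \<open>x\<close>, and conversely. Hence \<open>\<real>\<^sub>S\<close> is closed under
  \<open>x \<mapsto> x + 1\<close>. For infinite \<open>\<kappa> = |S|\<close>, split any \<open>\<kappa>\<close> elements of \<open>\<real>\<^sub>S\<close> by
  the parity of their integer parts; one class, call it \<open>E\<close>, still has size \<open>\<kappa>\<close> and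
  never contains both \<open>x\<close> and \<open>x + 1\<close>. The pairs \<open>(x, x + 1)\<close> for \<open>x \<in> E\<close> are then
  \<open>\<kappa>\<close> pairwise disjoint pairs in \<open>\<real>\<^sub>S\<close>, and no two of them are oppositely
  ordered, so \<open>\<real>\<^sub>S\<close> is not \<open>\<kappa>\<close>-2-entangled.\<close>

text \<open>Only the values on argument lists of length \<open>n\<close> are kept: relativizing an oracle
  query preserves no more than these.\<close>

definition partial_rec_in :: "nat set \<Rightarrow> nat \<Rightarrow> (nat list \<Rightarrow> nat option) \<Rightarrow> bool" where
  "partial_rec_in B n f \<longleftrightarrow> (\<exists>g. orec B n g \<and> (\<forall>xs. length xs = n \<longrightarrow> g xs = f xs))"

lemma partial_rec_in_cong:
  "partial_rec_in B n f \<Longrightarrow> (\<And>xs. length xs = n \<Longrightarrow> f xs = g xs) \<Longrightarrow> partial_rec_in B n g"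
  unfolding partial_rec_in_def by metis

lemma orec_imp_partial_rec_in: "orec B n f \<Longrightarrow> partial_rec_in B n f"
  unfolding partial_rec_in_def by blast

lemma partial_rec_in_comp:
  assumes g: "partial_rec_in B m g" and len: "length fs = m"
    and fs: "\<forall>f\<in>set fs. partial_rec_in B n f"
  shows "partial_rec_in B n
    (\<lambda>xs. if \<forall>f\<in>set fs. f xs \<noteq> None then g (map (\<lambda>f. the (f xs)) fs) else None)"
proof -
  obtain g' where g': "orec B m g'" "\<And>xs. length xs = m \<Longrightarrow> g' xs = g xs"
    using g unfolding partial_rec_in_def by blast
  obtain c where c: "\<And>f. f \<in> set fs \<Longrightarrow> orec B n (c f)"
    "\<And>f xs. f \<in> set fs \<Longrightarrow> length xs = n \<Longrightarrow> c f xs = f xs"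
    using fs unfolding partial_rec_in_def by metis
  have "orec B n (\<lambda>xs. if \<forall>f\<in>set (map c fs). f xs \<noteq> None
      then g' (map (\<lambda>f. the (f xs)) (map c fs)) else None)"
    by (rule orec.comp[OF g'(1)]) (use len c in auto)
  then show ?thesis
    by (rule orec_imp_partial_rec_in[THEN partial_rec_in_cong]) (auto simp: c g' len cong: map_cong)
qed

lemma partial_rec_in_prec:
  assumes "partial_rec_in B n f" and "partial_rec_in B (n + 2) g"
  shows "partial_rec_in B (n + 1) (\<lambda>xs. prec f g (hd xs) (tl xs))"
proof -
  obtain f' where f': "orec B n f'" "\<And>xs. length xs = n \<Longrightarrow> f' xs = f xs"
    using assms(1) unfolding partial_rec_in_def by blast
  obtain g' where g': "orec B (n + 2) g'" "\<And>xs. length xs = n + 2 \<Longrightarrow> g' xs = g xs"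
    using assms(2) unfolding partial_rec_in_def by blast
  have "prec f' g' y ys = prec f g y ys" if "length ys = n" for y ys
    using that by (induction y) (auto simp: f' g' split: option.split)
  then show ?thesis
    using orec.prim_rec[OF f'(1) g'(1)] unfolding partial_rec_in_def by auto
qed

lemma partial_rec_in_mu_op:
  assumes "partial_rec_in B (n + 1) f"
  shows "partial_rec_in B n (mu_op f)"
proof -
  obtain f' where f': "orec B (n + 1) f'" "\<And>xs. length xs = n + 1 \<Longrightarrow> f' xs = f xs"
    using assms unfolding partial_rec_in_def by blast
  have "mu_op f' xs = mu_op f xs" if "length xs = n" for xs
    unfolding mu_op_def using f'(2)[of "_ # xs"] that by simp
  then show ?thesis
    using orec.minim[OF f'(1)] unfolding partial_rec_in_def by blast
qed

definition computable_in :: "nat set \<Rightarrow> nat \<Rightarrow> (nat list \<Rightarrow> nat) \<Rightarrow> bool" where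
  "computable_in B n F \<longleftrightarrow> partial_rec_in B n (\<lambda>xs. Some (F xs))"

lemma turing_le_iff_computable_in:
  "turing_le A B \<longleftrightarrow> computable_in B 1 (\<lambda>xs. if xs ! 0 \<in> A then 1 else 0)"
  unfolding turing_le_def computable_in_def partial_rec_in_def
  by (auto simp: length_Suc_conv)

lemma orec_relativize:
  assumes "orec A n f" and "turing_le A B"
  shows "partial_rec_in B n f"
  using assms(1)
proof (induction rule: orec.induct)
  case oracle_query
  show ?case
    using assms(2) unfolding turing_le_iff_computable_in computable_in_def
    by (rule partial_rec_in_cong) (auto simp: length_Suc_conv)
next
  case (comp m g fs n)
  then show ?case by (blast intro: partial_rec_in_comp)
next
  case (prim_rec n f g)
  from prim_rec.IH show ?case by (rule partial_rec_in_prec)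
next
  case (minim n f)
  from minim.IH show ?case by (rule partial_rec_in_mu_op)
qed (blast intro: orec_imp_partial_rec_in orec.intros)+

lemma turing_le_trans:
  assumes "turing_le A B" and "turing_le B C"
  shows "turing_le A C"
proof -
  obtain f where f: "orec B 1 f" "\<And>k. f [k] = Some (if k \<in> A then 1 else 0)"
    using assms(1) unfolding turing_le_def by blast
  obtain g where "orec C 1 g" "\<And>xs. length xs = 1 \<Longrightarrow> g xs = f xs"
    using orec_relativize[OF f(1) assms(2)] unfolding partial_rec_in_def by blast
  then show ?thesis
    unfolding turing_le_def using f(2) by force
qed

lemma tdeg_eqI: "turing_le A B \<Longrightarrow> turing_le B A \<Longrightarrow> tdeg A = tdeg B"
  unfolding tdeg_def using turing_le_trans by blast

lemma computable_in_cong: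
  "computable_in B n F \<Longrightarrow> (\<And>xs. length xs = n \<Longrightarrow> F xs = G xs) \<Longrightarrow> computable_in B n G"
  unfolding computable_in_def by (metis partial_rec_in_cong)

lemma computable_in_zero: "computable_in B n (\<lambda>_. 0)"
  unfolding computable_in_def by (rule orec_imp_partial_rec_in orec.zero)+

lemma computable_in_Suc: "computable_in B 1 (\<lambda>xs. Suc (xs ! 0))"
  unfolding computable_in_def
  by (rule orec_imp_partial_rec_in[OF orec.succ, THEN partial_rec_in_cong])
    (auto simp: length_Suc_conv)

lemma computable_in_proj: "i < n \<Longrightarrow> computable_in B n (\<lambda>xs. xs ! i)"
  unfolding computable_in_def by (rule orec_imp_partial_rec_in orec.proj)+

lemma computable_in_oracle: "computable_in B 1 (\<lambda>xs. if xs ! 0 \<in> B then 1 else 0)"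
  unfolding computable_in_def
  by (rule orec_imp_partial_rec_in[OF orec.oracle_query, THEN partial_rec_in_cong])
    (auto simp: length_Suc_conv)

lemma computable_in_comp:
  assumes "computable_in B m G" and "length Fs = m" and "\<forall>F\<in>set Fs. computable_in B n F"
  shows "computable_in B n (\<lambda>xs. G (map (\<lambda>F. F xs) Fs))"
proof -
  have "partial_rec_in B n (\<lambda>xs. if \<forall>f\<in>set (map (\<lambda>F xs. Some (F xs)) Fs). f xs \<noteq> None
      then Some (G (map (\<lambda>f. the (f xs)) (map (\<lambda>F xs. Some (F xs)) Fs))) else None)"
    using assms unfolding computable_in_def by (intro partial_rec_in_comp) auto
  then show ?thesis
    unfolding computable_in_def by (rule partial_rec_in_cong) (simp add: comp_def)
qed

lemma computable_in_comp1:
  "computable_in B 1 (\<lambda>xs. f (xs ! 0)) \<Longrightarrow> computable_in B n H \<Longrightarrow>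
    computable_in B n (\<lambda>xs. f (H xs))"
  using computable_in_comp[of B 1 "\<lambda>xs. f (xs ! 0)" "[H]" n] by simp

lemma computable_in_comp2:
  "computable_in B 2 (\<lambda>xs. f (xs ! 0) (xs ! 1)) \<Longrightarrow> computable_in B n H1 \<Longrightarrow>
    computable_in B n H2 \<Longrightarrow> computable_in B n (\<lambda>xs. f (H1 xs) (H2 xs))"
  using computable_in_comp[of B 2 "\<lambda>xs. f (xs ! 0) (xs ! 1)" "[H1, H2]" n] by simp

lemma computable_in_rec_nat:
  assumes "computable_in B n F" and "computable_in B (n + 2) G"
  shows "computable_in B (n + 1) (\<lambda>xs. rec_nat (F (tl xs)) (\<lambda>y r. G (y # r # tl xs)) (hd xs))"
proof -
  have "prec (\<lambda>ys. Some (F ys)) (\<lambda>ys. Some (G ys)) y ys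
      = Some (rec_nat (F ys) (\<lambda>y r. G (y # r # ys)) y)" for y ys
    by (induction y) auto
  then show ?thesis
    using partial_rec_in_prec[OF assms[unfolded computable_in_def]]
    unfolding computable_in_def by simp
qed

lemma computable_in_Least:
  assumes "computable_in B (n + 1) F" and "\<And>xs. length xs = n \<Longrightarrow> \<exists>y. F (y # xs) = 0"
  shows "computable_in B n (\<lambda>xs. LEAST y. F (y # xs) = 0)"
proof -
  have eq: "mu_op (\<lambda>xs. Some (F xs)) xs = Some (LEAST y. F (y # xs) = 0)"
    if len: "length xs = n" for xs
  proof -
    obtain y where y: "F (y # xs) = 0" using assms(2)[OF len] by blast
    define m where "m = (LEAST y. F (y # xs) = 0)"
    have m: "F (m # xs) = 0" "\<And>z. z < m \<Longrightarrow> F (z # xs) \<noteq> 0"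
      unfolding m_def by (rule LeastI[where P = "\<lambda>y. F (y # xs) = 0", OF y], rule not_less_Least)
    have "(LEAST y. F (y # xs) = 0 \<and> (\<forall>z<y. F (z # xs) \<noteq> 0)) = m"
    proof (rule Least_equality)
      show "F (m # xs) = 0 \<and> (\<forall>z<m. F (z # xs) \<noteq> 0)" using m by blast
      show "m \<le> y" if "F (y # xs) = 0 \<and> (\<forall>z<y. F (z # xs) \<noteq> 0)" for y
        using that unfolding m_def by (blast intro: Least_le)
    qed
    moreover have "\<exists>y. F (y # xs) = 0 \<and> (\<forall>z<y. F (z # xs) \<noteq> 0)" using m by blast
    ultimately show ?thesis by (simp add: mu_op_def m_def)
  qed
  from partial_rec_in_mu_op[OF assms(1)[unfolded computable_in_def]] eq show ?thesis
    unfolding computable_in_def by (rule partial_rec_in_cong)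
qed

lemma computable_in_Suc_comp: "computable_in B n H \<Longrightarrow> computable_in B n (\<lambda>xs. Suc (H xs))"
  by (rule computable_in_comp1[OF computable_in_Suc])

lemma computable_in_add:
  assumes "computable_in B n H1" and "computable_in B n H2"
  shows "computable_in B n (\<lambda>xs. H1 xs + H2 xs)"
proof -
  have rec: "rec_nat b (\<lambda>_ r. Suc r) a = a + b" for a b :: nat
    by (induction a) auto
  have "computable_in B (1 + 1) (\<lambda>xs. xs ! 0 + xs ! 1)"
    by (rule computable_in_cong[OF computable_in_rec_nat[OF computable_in_proj[of 0 1]
          computable_in_comp1[OF computable_in_Suc computable_in_proj[of 1 "1 + 2"]]]])
      (auto simp: rec length_Suc_conv)
  then show ?thesis
    using computable_in_comp2[where f = "(+)", OF _ assms] by (simp only: one_add_one)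
qed

lemma computable_in_diff:
  assumes "computable_in B n H1" and "computable_in B n H2"
  shows "computable_in B n (\<lambda>xs. H1 xs - H2 xs)"
proof -
  have pred_rec: "rec_nat 0 (\<lambda>y _. y) a = a - 1" for a :: nat
    by (cases a) auto
  have "computable_in B (0 + 1) (\<lambda>xs. xs ! 0 - 1)"
    by (rule computable_in_cong[OF computable_in_rec_nat[OF computable_in_zero
          computable_in_proj[of 0 "0 + 2"]]])
      (auto simp: pred_rec length_Suc_conv)
  then have pred: "computable_in B 1 (\<lambda>xs. xs ! 0 - 1)"
    by simp
  have rec: "rec_nat b (\<lambda>_ r. r - Suc 0) a = b - a" for a b :: nat
    by (induction a) auto
  have "computable_in B (1 + 1) (\<lambda>xs. xs ! 1 - xs ! 0)"
    by (rule computable_in_cong[OF computable_in_rec_nat[OF computable_in_proj[of 0 1]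
          computable_in_comp1[OF pred computable_in_proj[of 1 "1 + 2"]]]])
      (auto simp: rec length_Suc_conv)
  then show ?thesis
    using computable_in_comp2[where f = "\<lambda>a b. b - a", OF _ assms(2,1)] by (simp only: one_add_one)
qed

lemma computable_in_triangle:
  assumes "computable_in B n H"
  shows "computable_in B n (\<lambda>xs. triangle (H xs))"
proof -
  have rec: "rec_nat 0 (\<lambda>y r. Suc (y + r)) a = triangle a" for a
    by (induction a) auto
  have "computable_in B (0 + 2) (\<lambda>ys. Suc (ys ! 0 + ys ! 1))"
    by (intro computable_in_Suc_comp computable_in_add computable_in_proj) auto
  then have "computable_in B (0 + 1) (\<lambda>xs. triangle (xs ! 0))"
    by (rule computable_in_cong[OF computable_in_rec_nat[OF computable_in_zero]])
      (auto simp: rec length_Suc_conv)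
  then show ?thesis
    using computable_in_comp1[where f = triangle, OF _ assms] by simp
qed

lemma triangle_mono: "m \<le> n \<Longrightarrow> triangle m \<le> triangle n"
  unfolding triangle_def by (intro div_le_mono mult_le_mono) auto

lemma prod_decode_sum_eq_Least:
  "fst (prod_decode n) + snd (prod_decode n) = (LEAST s. n < triangle (Suc s))"
proof -
  obtain a b where ab: "prod_decode n = (a, b)" by fastforce
  then have n: "n = triangle (a + b) + a"
    using prod_decode_inverse[of n] by (simp add: prod_encode_def)
  have "(LEAST s. n < triangle (Suc s)) = a + b"
  proof (rule Least_equality)
    show "n < triangle (Suc (a + b))" using n by simp
    show "a + b \<le> s" if "n < triangle (Suc s)" for s
    proof (rule ccontr)
      assume "\<not> a + b \<le> s"
      then have "triangle (Suc s) \<le> triangle (a + b)" by (intro triangle_mono) simp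
      with that n show False by simp
    qed
  qed
  then show ?thesis using ab by simp
qed

lemma fst_prod_decode:
  "fst (prod_decode n) = n - triangle (fst (prod_decode n) + snd (prod_decode n))"
  using prod_decode_inverse[of n] by (cases "prod_decode n") (simp add: prod_encode_def)

lemma computable_in_prod_decode_sum:
  assumes "computable_in B n H"
  shows "computable_in B n (\<lambda>xs. fst (prod_decode (H xs)) + snd (prod_decode (H xs)))"
proof -
  have zero_iff: "Suc m - t = 0 \<longleftrightarrow> m < t" for m t :: nat
    by arith
  have F: "computable_in B (1 + 1) (\<lambda>ys. Suc (ys ! 1) - triangle (Suc (ys ! 0)))"
    by (intro computable_in_diff computable_in_triangle computable_in_Suc_comp computable_in_proj)
      auto
  have ex: "\<exists>s. Suc ((s # xs) ! 1) - triangle (Suc ((s # xs) ! 0)) = 0" for xs :: "nat list"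
    by (rule exI[of _ "xs ! 0"]) simp
  have "computable_in B 1 (\<lambda>xs. LEAST s. Suc ((s # xs) ! 1) - triangle (Suc ((s # xs) ! 0)) = 0)"
    by (rule computable_in_Least[OF F ex])
  then have "computable_in B 1 (\<lambda>xs. LEAST s. xs ! 0 < triangle (Suc s))"
    by (rule computable_in_cong) (simp only: nth_Cons_0 One_nat_def nth_Cons_Suc zero_iff)
  then show ?thesis
    unfolding prod_decode_sum_eq_Least by (rule computable_in_comp1[OF _ assms])
qed

lemma computable_in_fst_prod_decode:
  "computable_in B n H \<Longrightarrow> computable_in B n (\<lambda>xs. fst (prod_decode (H xs)))"
  by (subst fst_prod_decode)
    (intro computable_in_diff computable_in_triangle computable_in_prod_decode_sum)

lemma computable_in_snd_prod_decode:
  "computable_in B n H \<Longrightarrow> computable_in B n (\<lambda>xs. snd (prod_decode (H xs)))"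
  by (rule computable_in_cong[OF computable_in_diff[OF computable_in_prod_decode_sum
        computable_in_fst_prod_decode]]) auto

lemma computable_in_prod_encode:
  "computable_in B n H1 \<Longrightarrow> computable_in B n H2 \<Longrightarrow>
    computable_in B n (\<lambda>xs. prod_encode (H1 xs, H2 xs))"
  unfolding prod_encode_def
  by (simp add: computable_in_add computable_in_triangle)

lemma turing_le_vimage:
  assumes "computable_in B 1 (\<lambda>xs. h (xs ! 0))"
  shows "turing_le (h -` B) B"
  unfolding turing_le_iff_computable_in
  using computable_in_comp1[where f = "\<lambda>k. if k \<in> B then 1 else 0", OF computable_in_oracle assms]
  by simp

definition rat_code_minus_one :: "nat \<Rightarrow> nat" where
  "rat_code_minus_one n =
    (case prod_decode n of (a, m) \<Rightarrow> case prod_decode m of (b, c) \<Rightarrow>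
      prod_encode (a, prod_encode (b + Suc c, c)))"

definition rat_code_plus_one :: "nat \<Rightarrow> nat" where
  "rat_code_plus_one n =
    (case prod_decode n of (a, m) \<Rightarrow> case prod_decode m of (b, c) \<Rightarrow>
      prod_encode (a + Suc c, m))"

lemma rat_code_prod_encode:
  "rat_code (prod_encode (a, prod_encode (b, c))) = (real a - real b) / (real c + 1)"
  by (simp add: rat_code_def)

lemma prod_encode_cases:
  obtains a b c where "n = prod_encode (a, prod_encode (b, c))"
  by (metis prod_decode_inverse surj_pair)

lemma rat_code_minus_one: "rat_code (rat_code_minus_one n) = rat_code n - 1"
  by (cases n rule: prod_encode_cases)
    (simp add: rat_code_minus_one_def rat_code_prod_encode field_simps)

lemma rat_code_plus_one: "rat_code (rat_code_plus_one n) = rat_code n + 1"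
  by (cases n rule: prod_encode_cases)
    (simp add: rat_code_plus_one_def rat_code_prod_encode field_simps)

lemma computable_in_rat_code_minus_one: "computable_in B 1 (\<lambda>xs. rat_code_minus_one (xs ! 0))"
  unfolding rat_code_minus_one_def case_prod_beta
  by (intro computable_in_prod_encode computable_in_fst_prod_decode computable_in_snd_prod_decode
      computable_in_add computable_in_Suc_comp computable_in_proj) auto

lemma computable_in_rat_code_plus_one: "computable_in B 1 (\<lambda>xs. rat_code_plus_one (xs ! 0))"
  unfolding rat_code_plus_one_def case_prod_beta
  by (intro computable_in_prod_encode computable_in_fst_prod_decode computable_in_snd_prod_decode
      computable_in_add computable_in_Suc_comp computable_in_proj) auto

lemma rdeg_add_one: "rdeg (x + 1) = rdeg x"
proof -
  have "real_cut (x + 1) = rat_code_minus_one -` real_cut x"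
    by (auto simp: real_cut_def rat_code_minus_one)
  moreover have "real_cut x = rat_code_plus_one -` real_cut (x + 1)"
    by (auto simp: real_cut_def rat_code_plus_one)
  ultimately show ?thesis
    unfolding rdeg_def using turing_le_vimage
      computable_in_rat_code_minus_one computable_in_rat_code_plus_one
    by (metis tdeg_eqI)
qed

lemma lepoll_Un_infinite:
  includes cardinal_syntax
  assumes "infinite S" and "S \<lesssim> A \<union> B"
  shows "S \<lesssim> A \<or> S \<lesssim> B"
proof (rule ccontr)
  have lepoll_iff: "X \<lesssim> Y \<longleftrightarrow> |X| \<le>o |Y|" for X :: "'a set" and Y :: "'b set"
    by (simp add: lepoll_def card_of_ordLeq[symmetric])
  assume "\<not> (S \<lesssim> A \<or> S \<lesssim> B)"
  then have "|A| <o |S|" and "|B| <o |S|"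
    by (simp_all add: lepoll_iff not_ordLeq_iff_ordLess[OF card_of_Well_order card_of_Well_order])
  then have "|A \<union> B| <o |S|"
    using assms(1) by (rule card_of_Un_ordLess_infinite[rotated])
  with assms(2) show False
    by (simp add: lepoll_iff not_ordLess_ordLeq)
qed

lemma lepoll_unit_separated_subset:
  fixes A :: "real set"
  assumes "infinite S" and "S \<lesssim> A"
  obtains E where "E \<subseteq> A" and "S \<lesssim> E" and "\<And>x. x \<in> E \<Longrightarrow> x + 1 \<notin> E"
proof -
  define E where "E p = {x \<in> A. even \<lfloor>x\<rfloor> = p}" for p
  have "A = E True \<union> E False"
    by (auto simp: E_def)
  then obtain p where "S \<lesssim> E p"
    using lepoll_Un_infinite assms by metis
  moreover have "x + 1 \<notin> E p" if "x \<in> E p" for x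
    using that by (auto simp: E_def)
  ultimately show thesis
    using that[of "E p"] by (auto simp: E_def)
qed

lemma not_entangled2_if_closed_add_one:
  assumes "infinite K" and closed: "\<And>x. x \<in> A \<Longrightarrow> x + 1 \<in> A"
  shows "\<not> entangled2 K A"
proof
  assume ent: "entangled2 K A"
  then have "K \<lesssim> A"
    unfolding entangled2_def by blast
  then obtain E where E: "E \<subseteq> A" "K \<lesssim> E" "\<And>x. x \<in> E \<Longrightarrow> x + 1 \<notin> E"
    using lepoll_unit_separated_subset assms(1) by metis
  then obtain f where f: "inj_on f K" "f ` K \<subseteq> E"
    unfolding lepoll_def by blast
  define C where "C = (\<lambda>x. (x, x + 1)) ` f ` K"
  have "C \<approx> f ` K"
    unfolding C_def by (rule inj_on_image_eqpoll_self) (auto simp: inj_on_def)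
  then have "C \<approx> K"
    using f(1) eqpoll_trans inj_on_image_eqpoll_self by blast
  moreover have "C \<subseteq> A \<times> A"
    using E(1) f(2) closed by (auto simp: C_def)
  moreover have "\<forall>c\<in>C. fst c \<noteq> snd c"
    by (auto simp: C_def)
  moreover have "\<forall>c\<in>C. \<forall>d\<in>C. c \<noteq> d \<longrightarrow> {fst c, snd c} \<inter> {fst d, snd d} = {}"
    using E(3) f(2) by (fastforce simp: C_def)
  ultimately obtain w1 z1 w2 z2 where "(w1, z1) \<in> C" "(w2, z2) \<in> C" "w1 < w2" "z2 < z1"
    using ent unfolding entangled2_def by blast
  then show False
    by (auto simp: C_def)
qed

theorem mainTheorem16:
  shows "\<not> (\<exists>S. S \<subseteq> range tdeg \<and> uncountable S \<and> entangled2 S (reals_of_degrees S))"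
proof
  assume "\<exists>S. S \<subseteq> range tdeg \<and> uncountable S \<and> entangled2 S (reals_of_degrees S)"
  then obtain S where "uncountable S" and ent: "entangled2 S (reals_of_degrees S)"
    by blast
  then have "infinite S"
    using countable_finite by blast
  moreover have "x + 1 \<in> reals_of_degrees S" if "x \<in> reals_of_degrees S" for x
    using that by (simp add: reals_of_degrees_def rdeg_add_one)
  ultimately show False
    using not_entangled2_if_closed_add_one ent by blast
qed

end
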